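(* Let $\alpha\in(0,1)$, $\mathrm{g}\ge 0$, $\epsilon>0$, and consider the variable-step L1 finite-difference scheme described in the context. If the maximum time step size $\tau=\max_{1\le k\le N}\tau_k$ satisfies $$\tau \le \left(\frac{3}{\Gamma(2-\alpha)(4\mathrm{g}^2+3\epsilon)}\right)^{1/\alpha},$$ then for every $n$ with $1\le n\le N$, given $u^0,\dots,u^{n-1}\in\mathcal{V}_h$, the scheme at level $n$ has a unique solution $u^n\in\mathcal{V}_h$. That is, the numerical scheme is uniquely solvable.
   Context: Time grid: $0=t_0<t_1<\dots<t_N=T$, $\tau_k=t_k-t_{k-1}$, $\tau=\max_k\tau_k$, $\triangledown_\tau v^k=v^k-v^{k-1}$. Let $\omega_{\beta}(t)=t^{\beta-1}/\Gamma(\beta)$. The L1 kernels are $a^{(n)}_{n-k}=\frac{1}{\tau_k}\int_{t_{k-1}}^{t_k}\omega_{1-\alpha}(t_n-s)\,ds$ for $1\le k\le n$, and the L1 approximation of the Caputo derivative is $D^\alpha_\tau v^n=\sum_{k=1}^n a^{(n)}_{n-k}\triangledown_\tau v^k$. Space: $\Omega=(0,L)^2$, $h=L/M$, $x_i=ih$, $y_j=jh$. $\mathcal{V}_h$ is the set of grid functions on $\{(x_i,y_j):0\le i,j\le M\}$ that are $L$-periodic in each direction. $\delta_x^2v_{ij}=(v_{i+1,j}-2v_{ij}+v_{i-1,j})/h^2$, similarly $\delta_y^2$, and $\Delta_h=\delta_x^2+\delta_y^2$. Discrete inner product $\langle v,w\rangle=h^2\sum_{1\le i,j\le M-1}v_{ij}w_{ij}$,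 $\|v\|=\sqrt{\langle v,v\rangle}$. Let $f(u)=u^3-\mathrm{g}u^2-\epsilon u$ (the derivative of $F(u)=\frac14u^4-\frac{\mathrm g}{3}u^3-\frac{\epsilon}{2}u^2$). The scheme is: given $u^0_h=u_0(x_h)$, find $u^n\in\mathcal{V}_h$ with $$D^\alpha_\tau u^n_h=-\mu^n_h,\qquad \mu^n_h=(1+\Delta_h)^2u^n_h+f(u^n_h),\qquad 1\le n\le N,$$ at the grid points (with periodic boundary conditions). *)

theory Defs
  imports "HOL-Analysis.Analysis"
begin

text \<open>Grid functions are represented as functions on integer index pairs
  (i,j) \<mapsto> v i j (value at (x_i,y_j) = (i h, j h)), extended periodically.
  The space V_h of L-periodic grid functions is the set of M-periodic ones.\<close>

definition grid_periodic :: "nat \<Rightarrow> (int \<Rightarrow> int \<Rightarrow> real) \<Rightarrow> bool" where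
  "grid_periodic M v \<longleftrightarrow>
     (\<forall>i j. v (i + int M) j = v i j \<and> v i (j + int M) = v i j)"

definition delta_xx :: "real \<Rightarrow> (int \<Rightarrow> int \<Rightarrow> real) \<Rightarrow> int \<Rightarrow> int \<Rightarrow> real" where
  "delta_xx h v i j = (v (i + 1) j - 2 * v i j + v (i - 1) j) / h\<^sup>2"

definition delta_yy :: "real \<Rightarrow> (int \<Rightarrow> int \<Rightarrow> real) \<Rightarrow> int \<Rightarrow> int \<Rightarrow> real" where
  "delta_yy h v i j = (v i (j + 1) - 2 * v i j + v i (j - 1)) / h\<^sup>2"

definition lap_h :: "real \<Rightarrow> (int \<Rightarrow> int \<Rightarrow> real) \<Rightarrow> int \<Rightarrow> int \<Rightarrow> real" where
  "lap_h h v i j = delta_xx h v i j + delta_yy h v i j"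

definition one_plus_lap :: "real \<Rightarrow> (int \<Rightarrow> int \<Rightarrow> real) \<Rightarrow> int \<Rightarrow> int \<Rightarrow> real" where
  "one_plus_lap h v = (\<lambda>i j. v i j + lap_h h v i j)"

definition fnl :: "real \<Rightarrow> real \<Rightarrow> real \<Rightarrow> real" where
  "fnl g \<epsilon> u = u ^ 3 - g * u\<^sup>2 - \<epsilon> * u"

definition omega :: "real \<Rightarrow> real \<Rightarrow> real" where
  "omega \<beta> t = t powr (\<beta> - 1) / Gamma \<beta>"

definition l1_kernel :: "real \<Rightarrow> (nat \<Rightarrow> real) \<Rightarrow> nat \<Rightarrow> nat \<Rightarrow> real" where
  "l1_kernel \<alpha> t n k =
     (1 / (t k - t (k - 1))) * integral {t (k - 1) .. t k} (\<lambda>s. omega (1 - \<alpha>) (t n - s))"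

definition caputo_L1 :: "real \<Rightarrow> (nat \<Rightarrow> real) \<Rightarrow> nat \<Rightarrow> (nat \<Rightarrow> int \<Rightarrow> int \<Rightarrow> real)
    \<Rightarrow> int \<Rightarrow> int \<Rightarrow> real" where
  "caputo_L1 \<alpha> t n U i j = (\<Sum>k = 1..n. l1_kernel \<alpha> t n k * (U k i j - U (k - 1) i j))"

definition scheme_at :: "real \<Rightarrow> real \<Rightarrow> real \<Rightarrow> real \<Rightarrow> nat \<Rightarrow> (nat \<Rightarrow> real) \<Rightarrow> nat
    \<Rightarrow> (nat \<Rightarrow> int \<Rightarrow> int \<Rightarrow> real) \<Rightarrow> bool" where
  "scheme_at \<alpha> g \<epsilon> L M t n U \<longleftrightarrow>
     (\<forall>i\<in>{0..int M}. \<forall>j\<in>{0..int M}.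
        caputo_L1 \<alpha> t n U i j =
          - (one_plus_lap (L / real M) (one_plus_lap (L / real M) (U n)) i j + fnl g \<epsilon> (U n i j)))"

end

theory Submission
  imports Defs
begin

text \<open>Let \<open>d\<close> be the weight of \<open>u\<^sup>n\<close> in the L1 formula minus \<open>\<epsilon>\<close>. Level \<open>n\<close> of the scheme is then
  the equation \<open>cubic g d w + (1 + \<Delta>\<^sub>h)\<^sup>2 w = b\<close> on the periodic grid, where \<open>cubic g d y = y\<^sup>3 - g y\<^sup>2 + d y\<close>
  and \<open>b\<close> only involves earlier levels. That weight equals \<open>\<tau>\<^sub>n\<^sup>-\<^sup>\<alpha> / \<Gamma>(2 - \<alpha>)\<close>, so the step-size
  restriction says exactly \<open>4 g\<^sup>2 \<le> 3 d\<close>. Then the cubic is strictly increasing and its primitive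
  dominates \<open>y\<^sup>4 / 12\<close>, so the energy \<open>\<Sum> (cubic_primitive g d w - b w + ((1 + \<Delta>\<^sub>h) w)\<^sup>2 / 2)\<close> is
  continuous and coercive on the finite-dimensional space of periodic grid functions and attains its
  minimum. As \<open>1 + \<Delta>\<^sub>h\<close> is symmetric under periodic summation by parts, the Euler-Lagrange
  equation of the energy is the level-\<open>n\<close> equation. Uniqueness is monotonicity: for two solutions
  with difference \<open>e\<close>, testing the difference of the equations against \<open>e\<close> gives
  \<open>\<Sum> e (cubic g d w\<^sub>1 - cubic g d w\<^sub>2) + \<Sum> ((1 + \<Delta>\<^sub>h) e)\<^sup>2 = 0\<close>, where both sums are
  nonnegative and the first vanishes only for \<open>e = 0\<close>.\<close>

type_synonym grid = "int \<Rightarrow> int \<Rightarrow> real"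

lemma periodic_mod_eq:
  fixes f :: "int \<Rightarrow> 'a"
  assumes "\<And>x. f (x + m) = f x"
  shows "f (x mod m) = f x"
proof -
  have "f (y + k * m) = f y" for y k
  proof (induction k rule: int_induct[where k = 0])
    case (step1 k)
    then show ?case using assms[of "y + k * m"] by (simp add: algebra_simps)
  next
    case (step2 k)
    then show ?case using assms[of "y + (k - 1) * m"] by (simp add: algebra_simps)
  qed simp
  from this[of "x mod m" "x div m"] show ?thesis by simp
qed

lemma grid_periodic_mod_eq:
  assumes "grid_periodic M v"
  shows "v (i mod int M) (j mod int M) = v i j"
  using periodic_mod_eq[of "\<lambda>x. v x j" "int M" i] periodic_mod_eq[of "v (i mod int M)" "int M" j]
    assms unfolding grid_periodic_def by simp

lemma grid_periodic_eqI:
  assumes "0 < M" "grid_periodic M v" "grid_periodic M w"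
    and "\<And>a c. a < M \<Longrightarrow> c < M \<Longrightarrow> v (int a) (int c) = w (int a) (int c)"
  shows "v = w"
proof (intro ext)
  fix i j
  have "v i j = v (int (nat (i mod int M))) (int (nat (j mod int M)))"
    using grid_periodic_mod_eq[OF assms(2)] assms(1) by simp
  also have "\<dots> = w (int (nat (i mod int M))) (int (nat (j mod int M)))"
    using assms(1) by (intro assms(4)) (simp_all add: nat_less_iff)
  also have "\<dots> = w i j"
    using grid_periodic_mod_eq[OF assms(3)] assms(1) by simp
  finally show "v i j = w i j" .
qed

lemma grid_periodic_translate:
  assumes "grid_periodic M v"
  shows "grid_periodic M (\<lambda>i j. v (i + a) (j + b))"
proof -
  have "i + int M + a = (i + a) + int M" "j + int M + b = (j + b) + int M" for i j
    by simp_all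
  then show ?thesis
    using assms unfolding grid_periodic_def by metis
qed

lemma grid_periodic_compose2:
  assumes "grid_periodic M u" "grid_periodic M v"
  shows "grid_periodic M (\<lambda>i j. f (u i j) (v i j))"
  using assms unfolding grid_periodic_def by simp

definition grid_sum :: "nat \<Rightarrow> grid \<Rightarrow> real" where
  "grid_sum M v = (\<Sum>i<M. \<Sum>j<M. v (int i) (int j))"

lemma sum_periodic_translate:
  fixes f :: "int \<Rightarrow> 'a :: ab_group_add"
  assumes "\<And>x. f (x + int M) = f x"
  shows "(\<Sum>i<M. f (int i + a)) = (\<Sum>i<M. f (int i))"
proof -
  have step: "(\<Sum>i<M. g (int i + 1)) = (\<Sum>i<M. g (int i))"
    if "\<And>x. g (x + int M) = g x" for g :: "int \<Rightarrow> 'a"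
    using sum_lessThan_telescope[of "\<lambda>i. g (int i)" M] that[of 0]
    by (simp add: sum_subtractf ac_simps)
  show ?thesis
  proof (induction a rule: int_induct[where k = 0])
    case (step1 a)
    have "f (x + int M + a) = f (x + a)" for x
      using assms[of "x + a"] by (simp add: ac_simps)
    from step[of "\<lambda>x. f (x + a)", OF this] step1 show ?case
      by (simp add: ac_simps)
  next
    case (step2 a)
    have "f (x + int M + (a - 1)) = f (x + (a - 1))" for x
      using assms[of "x + (a - 1)"] by (simp add: algebra_simps)
    from step[of "\<lambda>x. f (x + (a - 1))", OF this] step2 show ?case
      by (simp add: algebra_simps)
  qed simp
qed

lemma grid_sum_translate:
  assumes "grid_periodic M v"
  shows "grid_sum M (\<lambda>i j. v (i + a) (j + b)) = grid_sum M v"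
proof -
  have "grid_sum M (\<lambda>i j. v (i + a) (j + b)) = (\<Sum>i<M. \<Sum>j<M. v (int i + a) (int j))"
    using assms unfolding grid_sum_def grid_periodic_def
    by (intro sum.cong refl sum_periodic_translate) (simp add: algebra_simps)
  also have "\<dots> = (\<Sum>j<M. \<Sum>i<M. v (int i + a) (int j))"
    by (rule sum.swap)
  also have "\<dots> = (\<Sum>j<M. \<Sum>i<M. v (int i) (int j))"
    using assms unfolding grid_periodic_def
    by (intro sum.cong refl sum_periodic_translate) (simp add: algebra_simps)
  also have "\<dots> = grid_sum M v"
    unfolding grid_sum_def by (rule sum.swap)
  finally show ?thesis .
qed

lemma grid_sum_add: "grid_sum M (\<lambda>i j. u i j + v i j) = grid_sum M u + grid_sum M v"
  unfolding grid_sum_def by (simp add: sum.distrib)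

lemma grid_sum_cmult: "grid_sum M (\<lambda>i j. c * v i j) = c * grid_sum M v"
  unfolding grid_sum_def by (simp add: sum_distrib_left)

lemma grid_sum_divide: "grid_sum M (\<lambda>i j. v i j / c) = grid_sum M v / c"
  unfolding grid_sum_def by (simp add: sum_divide_distrib)

lemma grid_sum_const: "grid_sum M (\<lambda>i j. c) = real M * real M * c"
  unfolding grid_sum_def by simp

lemma grid_sum_cong:
  "(\<And>a c. a < M \<Longrightarrow> c < M \<Longrightarrow> u (int a) (int c) = v (int a) (int c)) \<Longrightarrow> grid_sum M u = grid_sum M v"
  unfolding grid_sum_def by (auto intro!: sum.cong)

lemma grid_sum_nonneg:
  "(\<And>a c. a < M \<Longrightarrow> c < M \<Longrightarrow> 0 \<le> v (int a) (int c)) \<Longrightarrow> 0 \<le> grid_sum M v"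
  unfolding grid_sum_def by (auto intro!: sum_nonneg)

lemma grid_sum_ge_member:
  assumes "\<And>a c. a < M \<Longrightarrow> c < M \<Longrightarrow> 0 \<le> v (int a) (int c)" "a < M" "c < M"
  shows "v (int a) (int c) \<le> grid_sum M v"
proof -
  have "v (int a) (int c) \<le> (\<Sum>j<M. v (int a) (int j))"
    using assms by (intro member_le_sum) auto
  also have "\<dots> \<le> grid_sum M v"
    unfolding grid_sum_def using assms
    by (intro member_le_sum[where f = "\<lambda>i. \<Sum>j<M. v (int i) (int j)"]) (auto intro!: sum_nonneg)
  finally show ?thesis .
qed

lemma one_plus_lap_eq:
  "one_plus_lap h v i j
     = (1 - 4 / h\<^sup>2) * v i j + (v (i + 1) j + v (i - 1) j + v i (j + 1) + v i (j - 1)) / h\<^sup>2"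
  unfolding one_plus_lap_def lap_h_def delta_xx_def delta_yy_def
  by (simp add: diff_divide_distrib add_divide_distrib algebra_simps)

lemma grid_periodic_one_plus_lap:
  assumes "grid_periodic M v"
  shows "grid_periodic M (one_plus_lap h v)"
  using grid_periodic_translate[OF assms, of 1 0] grid_periodic_translate[OF assms, of "-1" 0]
    grid_periodic_translate[OF assms, of 0 1] grid_periodic_translate[OF assms, of 0 "-1"] assms
  unfolding grid_periodic_def one_plus_lap_eq by simp

lemma one_plus_lap_add_smult:
  "one_plus_lap h (\<lambda>i j. u i j + c * v i j) i j = one_plus_lap h u i j + c * one_plus_lap h v i j"
proof -
  \<comment> \<open>with \<open>h\<^sup>2\<close> left in place the simplifier does not terminate\<close>
  define k where "k = 1 - 4 / h\<^sup>2"
  define q where "q = h\<^sup>2"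
  show ?thesis
    unfolding one_plus_lap_eq k_def[symmetric] q_def[symmetric]
    by (simp add: add_divide_distrib algebra_simps)
qed

lemma grid_sum_one_plus_lap_symmetric:
  assumes "grid_periodic M u" "grid_periodic M v"
  shows "grid_sum M (\<lambda>i j. u i j * one_plus_lap h v i j)
           = grid_sum M (\<lambda>i j. one_plus_lap h u i j * v i j)"
proof -
  define nb where "nb w i j = w (i + 1) j + w (i - 1) j + w i (j + 1) + w i (j - 1)"
    for w :: grid and i j
  have shift: "grid_sum M (\<lambda>i j. u i j * v (i + a) (j + b))
      = grid_sum M (\<lambda>i j. u (i - a) (j - b) * v i j)" for a b
    using grid_sum_translate[OF grid_periodic_compose2[where f = "(*)", OF
          grid_periodic_translate[OF assms(1), of "-a" "-b"] assms(2)], of a b]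
    by simp
  have "grid_sum M (\<lambda>i j. u i j * nb v i j) = grid_sum M (\<lambda>i j. nb u i j * v i j)"
    using shift[of 1 0] shift[of "-1" 0] shift[of 0 1] shift[of 0 "-1"]
    unfolding nb_def distrib_left distrib_right grid_sum_add by simp
  moreover have "grid_sum M (\<lambda>i j. x i j * one_plus_lap h y i j)
      = (1 - 4 / h\<^sup>2) * grid_sum M (\<lambda>i j. x i j * y i j)
        + grid_sum M (\<lambda>i j. x i j * nb y i j) / h\<^sup>2"
    for x y
    unfolding grid_sum_cmult[symmetric] grid_sum_divide[symmetric] grid_sum_add[symmetric]
    by (simp add: one_plus_lap_eq nb_def distrib_left mult.left_commute)
  moreover have "grid_sum M (\<lambda>i j. one_plus_lap h x i j * y i j)
      = (1 - 4 / h\<^sup>2) * grid_sum M (\<lambda>i j. x i j * y i j)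
        + grid_sum M (\<lambda>i j. nb x i j * y i j) / h\<^sup>2"
    for x y
    unfolding grid_sum_cmult[symmetric] grid_sum_divide[symmetric] grid_sum_add[symmetric]
    by (simp add: one_plus_lap_eq nb_def distrib_right mult.assoc mult.left_commute)
  ultimately show ?thesis
    by simp
qed

definition cubic :: "real \<Rightarrow> real \<Rightarrow> real \<Rightarrow> real" where
  "cubic g d y = y ^ 3 - g * y\<^sup>2 + d * y"

definition cubic_primitive :: "real \<Rightarrow> real \<Rightarrow> real \<Rightarrow> real" where
  "cubic_primitive g d y = y ^ 4 / 4 - g * y ^ 3 / 3 + d * y\<^sup>2 / 2"

lemma strict_mono_cubic:
  assumes "g\<^sup>2 \<le> 3 * d"
  shows "strict_mono (cubic g d)"
proof (rule strict_monoI)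
  fix x y :: real
  assume "x < y"
  have "0 < (y - x)\<^sup>2 / 4"
    using \<open>x < y\<close> by simp
  also have "\<dots> \<le> (y - x)\<^sup>2 / 4 + 3 / 4 * (x + y - 2 * g / 3)\<^sup>2 + (d - g\<^sup>2 / 3)"
    using assms by simp
  also have "\<dots> = x\<^sup>2 + x * y + y\<^sup>2 - g * (x + y) + d"
    by (simp add: power2_eq_square field_simps)
  finally have "0 < (y - x) * (x\<^sup>2 + x * y + y\<^sup>2 - g * (x + y) + d)"
    using \<open>x < y\<close> by simp
  also have "\<dots> = cubic g d y - cubic g d x"
    unfolding cubic_def by (simp add: power2_eq_square power3_eq_cube algebra_simps)
  finally show "cubic g d x < cubic g d y"
    by simp
qed

lemma strict_mono_diff_mult_pos:
  fixes f :: "real \<Rightarrow> real"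
  assumes "strict_mono f" "x \<noteq> y"
  shows "0 < (x - y) * (f x - f y)"
  using assms by (cases "x < y") (auto simp: strict_mono_def mult_pos_pos mult_neg_neg)

lemma cubic_primitive_ge:
  assumes "4 * g\<^sup>2 \<le> 3 * d"
  shows "y ^ 4 / 12 \<le> cubic_primitive g d y"
proof -
  have "cubic_primitive g d y - y ^ 4 / 12
      = y\<^sup>2 * ((y - g)\<^sup>2 / 6 + g\<^sup>2 / 2) + (d / 2 - 2 * g\<^sup>2 / 3) * y\<^sup>2"
    unfolding cubic_primitive_def
    by (simp add: power2_eq_square power3_eq_cube power4_eq_xxxx field_simps)
  moreover have "0 \<le> y\<^sup>2 * ((y - g)\<^sup>2 / 6 + g\<^sup>2 / 2)" "0 \<le> (d / 2 - 2 * g\<^sup>2 / 3) * y\<^sup>2"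
    using assms by simp_all
  ultimately show ?thesis
    by linarith
qed

lemma quartic_minus_linear_ge:
  fixes B y :: real
  assumes "0 \<le> B"
  shows "- (B * (12 * B + 1)) \<le> y ^ 4 / 12 - B * \<bar>y\<bar>"
proof (cases "\<bar>y\<bar> \<le> 12 * B + 1")
  case True
  then have "B * \<bar>y\<bar> \<le> B * (12 * B + 1)"
    using assms by (simp add: mult_left_mono)
  moreover have "0 \<le> y ^ 4"
    by simp
  ultimately show ?thesis
    by linarith
next
  case False
  then have "1 \<le> \<bar>y\<bar>" "12 * B \<le> \<bar>y\<bar>"
    using assms by linarith+
  then have "12 * B \<le> \<bar>y\<bar> ^ 3"
    using power_increasing[of 1 3 "\<bar>y\<bar>"] by simp
  then have "\<bar>y\<bar> * (12 * B) \<le> \<bar>y\<bar> * \<bar>y\<bar> ^ 3"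
    by (simp add: mult_left_mono)
  also have "\<bar>y\<bar> * \<bar>y\<bar> ^ 3 = y ^ 4"
    by (subst power_Suc[symmetric]) (simp add: power_even_abs_numeral)
  finally have "B * \<bar>y\<bar> \<le> y ^ 4 / 12"
    by (simp add: mult_ac)
  moreover have "0 \<le> B * (12 * B + 1)"
    using assms by simp
  ultimately show ?thesis
    by linarith
qed

definition level_operator :: "real \<Rightarrow> real \<Rightarrow> real \<Rightarrow> grid \<Rightarrow> grid" where
  "level_operator h g d w i j = cubic g d (w i j) + one_plus_lap h (one_plus_lap h w) i j"

definition energy :: "nat \<Rightarrow> real \<Rightarrow> real \<Rightarrow> real \<Rightarrow> grid \<Rightarrow> grid \<Rightarrow> real" where
  "energy M h g d b w =
     grid_sum M (\<lambda>i j. cubic_primitive g d (w i j) - b i j * w i j + (one_plus_lap h w i j)\<^sup>2 / 2)"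

lemma energy_directional_derivative:
  assumes "grid_periodic M w" "grid_periodic M e"
  shows "((\<lambda>s. energy M h g d b (\<lambda>i j. w i j + s * e i j)) has_real_derivative
           grid_sum M (\<lambda>i j.
             (cubic g d (w i j) - b i j + one_plus_lap h (one_plus_lap h w) i j) * e i j))
         (at 0)"
proof -
  have "((\<lambda>s. energy M h g d b (\<lambda>i j. w i j + s * e i j)) has_real_derivative
           grid_sum M (\<lambda>i j.
             (cubic g d (w i j) - b i j) * e i j + one_plus_lap h w i j * one_plus_lap h e i j))
         (at 0)"
    unfolding energy_def grid_sum_def one_plus_lap_add_smult
    by (auto intro!: derivative_eq_intros sum.cong
        simp: cubic_primitive_def cubic_def algebra_simps)
  moreover have "grid_sum M (\<lambda>i j. one_plus_lap h w i j * one_plus_lap h e i j)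
      = grid_sum M (\<lambda>i j. one_plus_lap h (one_plus_lap h w) i j * e i j)"
    using grid_sum_one_plus_lap_symmetric[OF grid_periodic_one_plus_lap[OF assms(1)] assms(2)] .
  ultimately show ?thesis
    by (simp add: distrib_right grid_sum_add)
qed

lemma energy_coercive:
  assumes "4 * g\<^sup>2 \<le> 3 * d"
  shows "\<exists>B\<ge>0. \<forall>w a c. a < M \<longrightarrow> c < M \<longrightarrow> B < \<bar>w (int a) (int c)\<bar> \<longrightarrow> 0 < energy M h g d b w"
proof -
  \<comment> \<open>the extra \<open>1/12\<close> leaves a surplus \<open>\<bar>w\<bar> / 12\<close> in every term, which makes the energy grow\<close>
  define \<beta> where "\<beta> = grid_sum M (\<lambda>i j. \<bar>b i j\<bar>) + 1 / 12"
  define K where "K = \<beta> * (12 * \<beta> + 1)"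
  have "0 \<le> grid_sum M (\<lambda>i j. \<bar>b i j\<bar>)"
    by (rule grid_sum_nonneg) simp
  then have \<beta>: "0 \<le> \<beta>" and K: "0 \<le> K"
    unfolding K_def \<beta>_def by simp_all
  have "0 < energy M h g d b w"
    if ac: "a < M" "c < M" "12 * (real M * real M * K) < \<bar>w (int a) (int c)\<bar>" for w a c
  proof -
    define T where
      "T i j = cubic_primitive g d (w i j) - b i j * w i j + (one_plus_lap h w i j)\<^sup>2 / 2" for i j
    have T: "\<bar>w (int i) (int j)\<bar> / 12 - K \<le> T (int i) (int j)" if "i < M" "j < M" for i j
    proof -
      define y where "y = w (int i) (int j)"
      have "b (int i) (int j) * y \<le> \<bar>b (int i) (int j)\<bar> * \<bar>y\<bar>"
        by (simp add: abs_mult[symmetric])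
      also have "\<dots> \<le> (\<beta> - 1 / 12) * \<bar>y\<bar>"
        unfolding \<beta>_def using that grid_sum_ge_member[where v = "\<lambda>i j. \<bar>b i j\<bar>"]
        by (intro mult_right_mono) simp_all
      finally have "b (int i) (int j) * y \<le> (\<beta> - 1 / 12) * \<bar>y\<bar>" .
      moreover have "y ^ 4 / 12 \<le> cubic_primitive g d y"
        by (rule cubic_primitive_ge[OF assms])
      moreover have "- K \<le> y ^ 4 / 12 - \<beta> * \<bar>y\<bar>"
        unfolding K_def by (rule quartic_minus_linear_ge[OF \<beta>])
      moreover have "0 \<le> (one_plus_lap h w (int i) (int j))\<^sup>2 / 2"
        by simp
      ultimately show ?thesis
        unfolding T_def y_def[symmetric] left_diff_distrib by linarith
    qed
    have "0 \<le> T (int i) (int j) + K" if "i < M" "j < M" for i j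
      using T[OF that] abs_ge_zero[of "w (int i) (int j)"] by linarith
    then have "T (int a) (int c) + K \<le> grid_sum M (\<lambda>i j. T i j + K)"
      using ac by (intro grid_sum_ge_member[where v = "\<lambda>i j. T i j + K"])
    also have "\<dots> = energy M h g d b w + real M * real M * K"
      unfolding energy_def T_def grid_sum_add grid_sum_const by simp
    finally show ?thesis
      using T[OF ac(1,2)] ac(3) by linarith
  qed
  then show ?thesis
    using K by (intro exI[of _ "12 * (real M * real M * K)"]) auto
qed

text \<open>Periodic grid functions are parametrised by arbitrary functions on \<open>\<int> \<times> \<int>\<close>, of which only the
  window \<open>[0, M)\<^sup>2\<close> matters; this parameter space carries the product topology, in which boxes
  are compact.\<close>

definition periodize :: "nat \<Rightarrow> (int \<times> int \<Rightarrow> real) \<Rightarrow> grid" where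
  "periodize M x = (\<lambda>i j. x (i mod int M, j mod int M))"

lemma grid_periodic_periodize: "grid_periodic M (periodize M x)"
  unfolding periodize_def grid_periodic_def by simp

lemma periodize_eq:
  assumes "grid_periodic M v"
  shows "periodize M (\<lambda>(i, j). v i j) = v"
  using grid_periodic_mod_eq[OF assms] unfolding periodize_def by simp

lemma periodize_int:
  assumes "a < M" "c < M"
  shows "periodize M x (int a) (int c) = x (int a, int c)"
  using assms unfolding periodize_def by (simp flip: zmod_int)

lemma truncation_mem_box:
  fixes B :: real
  assumes "0 \<le> B" "\<And>a c. a < M \<Longrightarrow> c < M \<Longrightarrow> \<bar>y (int a, int c)\<bar> \<le> B"
  shows "(\<lambda>q. if q \<in> {0..<int M} \<times> {0..<int M} then y q else 0)
           \<in> (\<Pi>\<^sub>E q\<in>UNIV. if q \<in> {0..<int M} \<times> {0..<int M} then {-B..B} else {0})"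
proof -
  have bound: "y q \<in> {-B..B}" if q: "q \<in> {0..<int M} \<times> {0..<int M}" for q
  proof -
    obtain i j where "q = (i, j)" "0 \<le> i" "i < int M" "0 \<le> j" "j < int M"
      using q by (cases q) auto
    then have "q = (int (nat i), int (nat j))" "nat i < M" "nat j < M"
      by auto
    then have "\<bar>y q\<bar> \<le> B"
      using assms(2) by blast
    then have "- B \<le> y q" "y q \<le> B"
      unfolding abs_le_iff by linarith+
    then show ?thesis
      by simp
  qed
  show ?thesis
    unfolding PiE_UNIV_domain
  proof (intro Pi_I)
    fix q
    show "(if q \<in> {0..<int M} \<times> {0..<int M} then y q else 0)
        \<in> (if q \<in> {0..<int M} \<times> {0..<int M} then {-B..B} else {0})"
      using bound[of q] by (cases "q \<in> {0..<int M} \<times> {0..<int M}") simp_all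
  qed
qed

lemma continuous_on_energy_periodize:
  "continuous_on UNIV (\<lambda>x. energy M h g d b (periodize M x))"
proof -
  have coordinate: "continuous_on UNIV (\<lambda>x. periodize M x i j)" for i j
    unfolding periodize_def by (intro continuous_on_product_coordinates)
  have stencil: "continuous_on UNIV (\<lambda>x. one_plus_lap h (periodize M x) i j)" for i j
    unfolding one_plus_lap_eq divide_inverse by (intro continuous_intros coordinate)
  show ?thesis
    unfolding energy_def grid_sum_def cubic_primitive_def divide_inverse
    by (intro continuous_intros coordinate stencil)
qed

lemma energy_has_periodic_minimizer:
  assumes "0 < M" "4 * g\<^sup>2 \<le> 3 * d"
  obtains w where "grid_periodic M w"
    "\<And>v. grid_periodic M v \<Longrightarrow> energy M h g d b w \<le> energy M h g d b v"
proof -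
  define E where "E x = energy M h g d b (periodize M x)" for x
  have cont: "continuous_on UNIV E"
    unfolding E_def by (rule continuous_on_energy_periodize)
  obtain B where "0 \<le> B"
    and B: "\<And>w a c. a < M \<Longrightarrow> c < M \<Longrightarrow> B < \<bar>w (int a) (int c)\<bar> \<Longrightarrow> 0 < energy M h g d b w"
    using energy_coercive[OF assms(2)] by blast
  define torus where "torus = {0..<int M} \<times> {0..<int M}"
  define box where "box = PiE UNIV (\<lambda>q. if q \<in> torus then {-B..B} else {0})"
  have "compactin (product_topology (\<lambda>_. euclidean) UNIV) box"
    unfolding box_def compactin_PiE by auto
  then have "compact box"
    unfolding euclidean_product_topology by simp
  moreover have zero: "(\<lambda>_. 0) \<in> box"
    unfolding box_def using \<open>0 \<le> B\<close> by auto
  ultimately obtain x0 where "x0 \<in> box" and x0: "\<And>y. y \<in> box \<Longrightarrow> E x0 \<le> E y"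
    using continuous_attains_inf[of box E] continuous_on_subset[OF cont subset_UNIV] by auto
  have min: "E x0 \<le> E y" for y
  proof (cases "\<exists>a<M. \<exists>c<M. B < \<bar>y (int a, int c)\<bar>")
    case True
    then obtain a c where "a < M" "c < M" "B < \<bar>y (int a, int c)\<bar>"
      by blast
    then have "0 < E y"
      unfolding E_def using B[of a c "periodize M y"] by (simp add: periodize_int)
    moreover have "E (\<lambda>_. 0) = 0"
      unfolding E_def energy_def periodize_def cubic_primitive_def one_plus_lap_eq grid_sum_def
      by simp
    ultimately show ?thesis
      using x0[OF zero] by simp
  next
    case False
    define y' where "y' q = (if q \<in> torus then y q else 0)" for q
    have "\<bar>y (int a, int c)\<bar> \<le> B" if "a < M" "c < M" for a c
      using False that by (meson not_less)
    then have "y' \<in> box"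
      unfolding y'_def box_def torus_def by (rule truncation_mem_box[OF \<open>0 \<le> B\<close>])
    moreover have "periodize M y' = periodize M y"
      unfolding periodize_def y'_def torus_def using assms(1) by auto
    ultimately show ?thesis
      using x0[of y'] unfolding E_def by simp
  qed
  show ?thesis
  proof (rule that[OF grid_periodic_periodize])
    fix v
    assume "grid_periodic M v"
    then show "energy M h g d b (periodize M x0) \<le> energy M h g d b v"
      using min[of "\<lambda>(i, j). v i j"] periodize_eq unfolding E_def by simp
  qed
qed

lemma grid_sum_mult_periodize_indicator:
  assumes "a < M" "c < M"
  shows "grid_sum M (\<lambda>i j. R i j * periodize M (\<lambda>q. if q = (int a, int c) then 1 else 0) i j)
           = R (int a) (int c)"
proof -
  have "grid_sum M (\<lambda>i j. R i j * periodize M (\<lambda>q. if q = (int a, int c) then 1 else 0) i j)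
      = (\<Sum>i<M. if i = a then (\<Sum>j<M. if j = c then R (int i) (int j) else 0) else 0)"
    unfolding grid_sum_def
    by (intro sum.cong refl) (auto simp: periodize_int if_distrib cong: if_cong)
  also have "\<dots> = R (int a) (int c)"
    using assms by simp
  finally show ?thesis .
qed

lemma periodic_minimizer_solves:
  assumes "0 < M" "grid_periodic M b" "grid_periodic M w"
    and min: "\<And>v. grid_periodic M v \<Longrightarrow> energy M h g d b w \<le> energy M h g d b v"
  shows "level_operator h g d w i j = b i j"
proof -
  define R where "R i j = cubic g d (w i j) - b i j + one_plus_lap h (one_plus_lap h w) i j" for i j
  have "R (int a) (int c) = 0" if "a < M" "c < M" for a c
  proof -
    define e where "e = periodize M (\<lambda>q. if q = (int a, int c) then 1 else 0)"
    have e: "grid_periodic M e"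
      unfolding e_def by (rule grid_periodic_periodize)
    have "((\<lambda>s. energy M h g d b (\<lambda>i j. w i j + s * e i j)) has_real_derivative
            grid_sum M (\<lambda>i j. R i j * e i j)) (at 0)"
      unfolding R_def by (rule energy_directional_derivative[OF assms(3) e])
    moreover have "energy M h g d b (\<lambda>i j. w i j + 0 * e i j)
        \<le> energy M h g d b (\<lambda>i j. w i j + s * e i j)" for s
      using min grid_periodic_compose2[OF assms(3) e, where f = "\<lambda>x y. x + s * y"] by simp
    ultimately have "grid_sum M (\<lambda>i j. R i j * e i j) = 0"
      by (intro DERIV_local_min[where d = 1]) auto
    then show ?thesis
      using grid_sum_mult_periodize_indicator[OF that] unfolding e_def by simp
  qed
  moreover have "grid_periodic M R"
    using assms(2,3) grid_periodic_one_plus_lap[OF grid_periodic_one_plus_lap[OF assms(3)]]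
    unfolding grid_periodic_def R_def by simp
  ultimately have "R = (\<lambda>_ _. 0)"
    using assms(1) by (intro grid_periodic_eqI) (auto simp: grid_periodic_def)
  then have "R i j = 0"
    by simp
  then show ?thesis
    unfolding R_def level_operator_def by simp
qed

lemma periodic_solution_unique:
  assumes "0 < M" "g\<^sup>2 \<le> 3 * d" "grid_periodic M w1" "grid_periodic M w2"
    and w1: "\<And>a c. a < M \<Longrightarrow> c < M \<Longrightarrow> level_operator h g d w1 (int a) (int c) = b (int a) (int c)"
    and w2: "\<And>a c. a < M \<Longrightarrow> c < M \<Longrightarrow> level_operator h g d w2 (int a) (int c) = b (int a) (int c)"
  shows "w1 = w2"
proof -
  define e where "e i j = w1 i j + (-1) * w2 i j" for i j
  have e: "grid_periodic M e"
    unfolding e_def using assms(3,4) by (rule grid_periodic_compose2)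
  have Ae: "one_plus_lap h e = (\<lambda>i j. one_plus_lap h w1 i j + (-1) * one_plus_lap h w2 i j)"
    unfolding e_def by (intro ext one_plus_lap_add_smult)
  have AAe: "one_plus_lap h (one_plus_lap h e) i j
      = one_plus_lap h (one_plus_lap h w1) i j + (-1) * one_plus_lap h (one_plus_lap h w2) i j" for i j
    unfolding Ae by (rule one_plus_lap_add_smult)
  define D where "D i j = e i j * (cubic g d (w1 i j) - cubic g d (w2 i j))" for i j
  have D_pos: "0 < D i j" if "w1 i j \<noteq> w2 i j" for i j
    unfolding D_def e_def using strict_mono_diff_mult_pos[OF strict_mono_cubic[OF assms(2)] that]
    by simp
  have D_nonneg: "0 \<le> D i j" for i j
    using D_pos[of i j] unfolding D_def e_def by fastforce
  have "grid_sum M D + grid_sum M (\<lambda>i j. e i j * one_plus_lap h (one_plus_lap h e) i j)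
      = grid_sum M (\<lambda>i j. 0)"
    unfolding grid_sum_add[symmetric]
  proof (intro grid_sum_cong)
    fix a c
    assume ac: "a < M" "c < M"
    have "D (int a) (int c) + e (int a) (int c) * one_plus_lap h (one_plus_lap h e) (int a) (int c)
        = e (int a) (int c) * (level_operator h g d w1 (int a) (int c) - level_operator h g d w2 (int a) (int c))"
      unfolding D_def AAe level_operator_def by (simp add: algebra_simps)
    also have "\<dots> = 0"
      using w1[OF ac] w2[OF ac] by simp
    finally show "D (int a) (int c) + e (int a) (int c) * one_plus_lap h (one_plus_lap h e) (int a) (int c)
      = 0" .
  qed
  moreover have "grid_sum M (\<lambda>i j. e i j * one_plus_lap h (one_plus_lap h e) i j)
      = grid_sum M (\<lambda>i j. one_plus_lap h e i j * one_plus_lap h e i j)"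
    by (rule grid_sum_one_plus_lap_symmetric[OF e grid_periodic_one_plus_lap[OF e]])
  moreover have "0 \<le> grid_sum M (\<lambda>i j. one_plus_lap h e i j * one_plus_lap h e i j)"
    by (intro grid_sum_nonneg) simp
  ultimately have "grid_sum M D \<le> 0"
    unfolding grid_sum_const by linarith
  then have "w1 (int a) (int c) = w2 (int a) (int c)" if "a < M" "c < M" for a c
    using grid_sum_ge_member[of M D, OF _ that] D_nonneg D_pos[of "int a" "int c"] by fastforce
  then show ?thesis
    using assms(1,3,4) by (rule grid_periodic_eqI[rotated 3])
qed

lemma periodic_solution_ex1:
  assumes "0 < M" "4 * g\<^sup>2 \<le> 3 * d" "grid_periodic M b"
  shows "\<exists>!w. grid_periodic M w \<and>
           (\<forall>i\<in>{0..int M}. \<forall>j\<in>{0..int M}. level_operator h g d w i j = b i j)"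
proof -
  obtain w where w: "grid_periodic M w"
    "\<And>v. grid_periodic M v \<Longrightarrow> energy M h g d b w \<le> energy M h g d b v"
    using energy_has_periodic_minimizer[OF assms(1,2)] by blast
  have "g\<^sup>2 \<le> 3 * d"
    using assms(2) zero_le_power2[of g] by linarith
  show ?thesis
  proof (rule ex1I[of _ w])
    show "grid_periodic M w \<and>
        (\<forall>i\<in>{0..int M}. \<forall>j\<in>{0..int M}. level_operator h g d w i j = b i j)"
      using periodic_minimizer_solves[OF assms(1,3) w] w(1) by blast
  next
    fix v
    assume v: "grid_periodic M v \<and>
        (\<forall>i\<in>{0..int M}. \<forall>j\<in>{0..int M}. level_operator h g d v i j = b i j)"
    show "v = w"
    proof (rule periodic_solution_unique[OF assms(1) \<open>g\<^sup>2 \<le> 3 * d\<close>])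
      show "grid_periodic M v" "grid_periodic M w"
        using v w(1) by simp_all
      fix a c
      assume "a < M" "c < M"
      then show "level_operator h g d v (int a) (int c) = b (int a) (int c)"
        using v by simp
      show "level_operator h g d w (int a) (int c) = b (int a) (int c)"
        by (rule periodic_minimizer_solves[OF assms(1,3) w])
    qed
  qed
qed

lemma has_integral_powr_diff:
  fixes \<alpha> a b :: real
  assumes "0 < \<alpha>" "\<alpha> < 1" "a < b"
  shows "((\<lambda>s. (b - s) powr (-\<alpha>)) has_integral (b - a) powr (1 - \<alpha>) / (1 - \<alpha>)) {a..b}"
proof -
  define F where "F s = (b - s) powr (1 - \<alpha>) / (\<alpha> - 1)" for s
  have "continuous_on {a..b} F"
    unfolding F_def using assms by (intro continuous_intros continuous_on_powr') auto
  moreover have "(F has_vector_derivative (b - s) powr (-\<alpha>)) (at s)" if "s \<in> {a<..<b}" for s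
  proof -
    have "(F has_real_derivative (1 - \<alpha>) * (b - s) powr (1 - \<alpha> - 1) * (-1) / (\<alpha> - 1)) (at s)"
      unfolding F_def using that assms by (auto intro!: derivative_eq_intros)
    moreover have "(1 - \<alpha>) * (b - s) powr (1 - \<alpha> - 1) * (-1) / (\<alpha> - 1) = (b - s) powr (-\<alpha>)"
      using assms by (simp add: divide_simps algebra_simps)
    ultimately show ?thesis
      by (simp add: has_real_derivative_iff_has_vector_derivative)
  qed
  ultimately have "((\<lambda>s. (b - s) powr (-\<alpha>)) has_integral F b - F a) {a..b}"
    using assms by (intro fundamental_theorem_of_calculus_interior) auto
  then show ?thesis
    unfolding F_def using assms by (simp add: minus_divide_right)
qed

lemma l1_kernel_diag:
  assumes "0 < \<alpha>" "\<alpha> < 1" "t (n - 1) < t n"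
  shows "l1_kernel \<alpha> t n n = (t n - t (n - 1)) powr (-\<alpha>) / Gamma (2 - \<alpha>)"
proof -
  define \<tau> where "\<tau> = t n - t (n - 1)"
  have \<tau>: "0 < \<tau>" using assms unfolding \<tau>_def by simp
  have "((\<lambda>s. omega (1 - \<alpha>) (t n - s)) has_integral \<tau> powr (1 - \<alpha>) / (1 - \<alpha>) / Gamma (1 - \<alpha>))
          {t (n - 1)..t n}"
    unfolding omega_def \<tau>_def
    using has_integral_divide[OF has_integral_powr_diff[OF assms]] by simp
  then have "l1_kernel \<alpha> t n n = \<tau> powr (1 - \<alpha>) / ((1 - \<alpha>) * Gamma (1 - \<alpha>)) / \<tau>"
    unfolding l1_kernel_def \<tau>_def by (simp add: integral_unique)
  also have "(1 - \<alpha>) * Gamma (1 - \<alpha>) = Gamma (2 - \<alpha>)"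
  proof -
    have "1 - \<alpha> \<notin> \<int>\<^sub>\<le>\<^sub>0"
      using assms by (auto elim!: nonpos_Ints_cases)
    from Gamma_plus1[OF this] show ?thesis
      by (simp add: algebra_simps)
  qed
  also have "\<tau> powr (1 - \<alpha>) = \<tau> * \<tau> powr (-\<alpha>)"
    using \<tau> powr_add[of \<tau> 1 "-\<alpha>"] by simp
  finally show ?thesis
    using \<tau> unfolding \<tau>_def by simp
qed

lemma l1_kernel_diag_ge:
  assumes "0 < \<alpha>" "\<alpha> < 1" "t (n - 1) < t n" "0 < \<kappa>"
    and "t n - t (n - 1) \<le> (1 / (Gamma (2 - \<alpha>) * \<kappa>)) powr (1 / \<alpha>)"
  shows "\<kappa> \<le> l1_kernel \<alpha> t n n"
proof -
  define \<tau> where "\<tau> = t n - t (n - 1)"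
  have \<Gamma>: "0 < Gamma (2 - \<alpha>)"
    using assms(2) by simp
  have "\<tau> powr \<alpha> \<le> ((1 / (Gamma (2 - \<alpha>) * \<kappa>)) powr (1 / \<alpha>)) powr \<alpha>"
    using assms unfolding \<tau>_def by (intro powr_mono2) auto
  also have "\<dots> = 1 / (Gamma (2 - \<alpha>) * \<kappa>)"
    using assms(1,4) \<Gamma> by (simp add: powr_powr)
  finally have "\<kappa> * (\<tau> powr \<alpha> * Gamma (2 - \<alpha>)) \<le> 1"
    using assms(4) \<Gamma> by (simp add: field_simps)
  moreover have "0 < \<tau> powr \<alpha> * Gamma (2 - \<alpha>)"
    using assms(3) \<Gamma> unfolding \<tau>_def by simp
  ultimately have "\<kappa> \<le> 1 / (\<tau> powr \<alpha> * Gamma (2 - \<alpha>))"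
    by (simp add: pos_le_divide_eq)
  then show ?thesis
    unfolding l1_kernel_diag[OF assms(1-3)] \<tau>_def[symmetric] by (simp add: powr_minus_divide)
qed

definition l1_history :: "real \<Rightarrow> (nat \<Rightarrow> real) \<Rightarrow> nat \<Rightarrow> (nat \<Rightarrow> grid) \<Rightarrow> grid" where
  "l1_history \<alpha> t n U i j = (\<Sum>k = 1..n - 1. l1_kernel \<alpha> t n k * (U k i j - U (k - 1) i j))"

lemma caputo_L1_split:
  assumes "1 \<le> n"
  shows "caputo_L1 \<alpha> t n U i j
           = l1_kernel \<alpha> t n n * (U n i j - U (n - 1) i j) + l1_history \<alpha> t n U i j"
proof -
  obtain m where "n = Suc m"
    using assms by (cases n) auto
  then show ?thesis
    unfolding caputo_L1_def l1_history_def by (simp add: sum.cl_ivl_Suc)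
qed

lemma l1_history_fun_upd: "l1_history \<alpha> t n (U(n := w)) = l1_history \<alpha> t n U"
  unfolding l1_history_def by (intro ext sum.cong) auto

lemma grid_periodic_l1_history:
  assumes "\<And>k. k < n \<Longrightarrow> grid_periodic M (U k)"
  shows "grid_periodic M (l1_history \<alpha> t n U)"
  using assms unfolding grid_periodic_def l1_history_def by (auto intro!: sum.cong)

lemma scheme_at_iff:
  assumes "1 \<le> n"
  shows "scheme_at \<alpha> g \<epsilon> L M t n (U(n := w)) \<longleftrightarrow>
    (\<forall>i\<in>{0..int M}. \<forall>j\<in>{0..int M}.
       level_operator (L / real M) g (l1_kernel \<alpha> t n n - \<epsilon>) w i j
       = l1_kernel \<alpha> t n n * U (n - 1) i j - l1_history \<alpha> t n U i j)"
proof -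
  have "c * (v - u) + H = - (A + fnl g \<epsilon> v) \<longleftrightarrow> cubic g (c - \<epsilon>) v + A = c * u - H"
    for c u v A H :: real
    unfolding cubic_def fnl_def by (auto simp: algebra_simps)
  then show ?thesis
    using assms
    unfolding scheme_at_def level_operator_def caputo_L1_split[OF assms] l1_history_fun_upd by simp
qed

theorem theorem2p1:
  fixes \<alpha> g \<epsilon> L T :: real and N M :: nat and t :: "nat \<Rightarrow> real"
  assumes "0 < \<alpha>" "\<alpha> < 1" "0 \<le> g" "0 < \<epsilon>" "0 < L" "0 < M"
    and "t 0 = 0" "\<forall>k\<in>{1..N}. t (k - 1) < t k" "t N = T"
    and "Max ((\<lambda>k. t k - t (k - 1)) ` {1..N})
           \<le> (3 / (Gamma (2 - \<alpha>) * (4 * g\<^sup>2 + 3 * \<epsilon>))) powr (1 / \<alpha>)"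
  shows "\<forall>n\<in>{1..N}. \<forall>U :: nat \<Rightarrow> int \<Rightarrow> int \<Rightarrow> real.
           (\<forall>k<n. grid_periodic M (U k)) \<longrightarrow>
           (\<exists>!w. grid_periodic M w \<and> scheme_at \<alpha> g \<epsilon> L M t n (U(n := w)))"
proof (intro ballI allI impI)
  fix n and U :: "nat \<Rightarrow> int \<Rightarrow> int \<Rightarrow> real"
  assume n: "n \<in> {1..N}" and U: "\<forall>k<n. grid_periodic M (U k)"
  define \<kappa> where "\<kappa> = (4 * g\<^sup>2 + 3 * \<epsilon>) / 3"
  have "0 < \<kappa>"
    unfolding \<kappa>_def using assms(4) by (simp add: add_nonneg_pos)
  have "t n - t (n - 1) \<le> Max ((\<lambda>k. t k - t (k - 1)) ` {1..N})"
    by (rule Max_ge) (use n in auto)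
  also have "\<dots> \<le> (1 / (Gamma (2 - \<alpha>) * \<kappa>)) powr (1 / \<alpha>)"
    using assms(10) unfolding \<kappa>_def by simp
  finally have "\<kappa> \<le> l1_kernel \<alpha> t n n"
    using l1_kernel_diag_ge[OF assms(1,2) _ \<open>0 < \<kappa>\<close>] assms(8) n by blast
  then have kernel: "4 * g\<^sup>2 \<le> 3 * (l1_kernel \<alpha> t n n - \<epsilon>)"
    unfolding \<kappa>_def by simp
  have "grid_periodic M (U (n - 1))" "grid_periodic M (l1_history \<alpha> t n U)"
    using U n by (simp_all add: grid_periodic_l1_history)
  then have rhs: "grid_periodic M (\<lambda>i j. l1_kernel \<alpha> t n n * U (n - 1) i j - l1_history \<alpha> t n U i j)"
    by (rule grid_periodic_compose2[where f = "\<lambda>x y. l1_kernel \<alpha> t n n * x - y"])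
  have "\<exists>!w. grid_periodic M w \<and> (\<forall>i\<in>{0..int M}. \<forall>j\<in>{0..int M}.
      level_operator (L / real M) g (l1_kernel \<alpha> t n n - \<epsilon>) w i j
      = l1_kernel \<alpha> t n n * U (n - 1) i j - l1_history \<alpha> t n U i j)"
    by (rule periodic_solution_ex1[OF assms(6) kernel rhs])
  then show "\<exists>!w. grid_periodic M w \<and> scheme_at \<alpha> g \<epsilon> L M t n (U(n := w))"
    using n by (simp add: scheme_at_iff)
qed

end
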